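(* Let $N\ge1$ be an integer, $d>0$, $T>0$, and $0\le s_1\le\dots\le s_N$. Let $x^*$ be the optimal solution of the (assumed feasible) problem $$\min_{x\in\mathbb{R}^{N+1}}\ \sum_{i=1}^{N+1}x_i^2$$ subject to - $\sum_{i=1}^k x_i\ge s_k+kd$ for $1\le k\le N$, - $x_i\ge 2d$ for $2\le i\le N$, - $x_{N+1}\ge d$, - $\sum_{i=1}^{N+1}x_i=T+Nd$. Then $x_N^*\ge x_{N+1}^*$. Moreover, $x_N^*>x_{N+1}^*$ only if at least one of the following holds: (1) $\sum_{i=1}^N x_i^*=s_N+Nd$, or (2) $x_N^*=2d$.
   Context: The problem arises from age-of-information minimization for a single energy harvesting transmitter with energy arrival times $s_k$, fixed service time $d$, and session length $T$. Its objective is strictly convex, so the optimal solution is unique. *)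

theory Defs
  imports Complex_Main
begin

text \<open>Vectors x in R^(N+1) are represented as functions nat => real, using indices 1..N+1.\<close>

definition aoi_feasible :: "nat \<Rightarrow> real \<Rightarrow> real \<Rightarrow> (nat \<Rightarrow> real) \<Rightarrow> (nat \<Rightarrow> real) \<Rightarrow> bool" where
  "aoi_feasible N d T s x \<longleftrightarrow>
     (\<forall>k\<in>{1..N}. (\<Sum>i=1..k. x i) \<ge> s k + real k * d) \<and>
     (\<forall>i\<in>{2..N}. x i \<ge> 2 * d) \<and>
     x (N + 1) \<ge> d \<and>
     (\<Sum>i=1..N+1. x i) = T + real N * d"

definition aoi_objective :: "nat \<Rightarrow> (nat \<Rightarrow> real) \<Rightarrow> real" where
  "aoi_objective N x = (\<Sum>i=1..N+1. (x i)\<^sup>2)"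

definition aoi_optimal :: "nat \<Rightarrow> real \<Rightarrow> real \<Rightarrow> (nat \<Rightarrow> real) \<Rightarrow> (nat \<Rightarrow> real) \<Rightarrow> bool" where
  "aoi_optimal N d T s x \<longleftrightarrow> aoi_feasible N d T s x \<and>
     (\<forall>y. aoi_feasible N d T s y \<longrightarrow> aoi_objective N x \<le> aoi_objective N y)"

end

theory Submission
  imports Defs
begin

text \<open>Moving an amount t from x_N to x_{N+1} keeps the total and every prefix sum before N,
  and changes the objective by 2t(t - (x_N - x_{N+1})). Optimality therefore forbids every
  feasible move with t strictly between 0 and x_N - x_{N+1}. If x_N < x_{N+1}, the move
  t = (x_N - x_{N+1})/2 that equalises the two entries is feasible, because x_N \<ge> d (for N = 1
  this comes from s_1 \<ge> 0); if x_N > x_{N+1} while both the last prefix constraint and the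
  constraint x_N \<ge> 2d are slack, a small positive move is feasible.\<close>

definition shift_to_last :: "nat \<Rightarrow> real \<Rightarrow> (nat \<Rightarrow> real) \<Rightarrow> nat \<Rightarrow> real" where
  "shift_to_last N t x = x(N := x N - t, N + 1 := x (N + 1) + t)"

lemma sum_shift_to_last_below:
  assumes "k < N"
  shows "(\<Sum>i=1..k. g (shift_to_last N t x i)) = (\<Sum>i=1..k. g (x i))"
  by (rule sum.cong) (use assms in \<open>auto simp: shift_to_last_def\<close>)

lemma sum_shift_to_last_upto:
  fixes g :: "real \<Rightarrow> 'a::ab_group_add"
  assumes "N \<ge> 1"
  shows "(\<Sum>i=1..N. g (shift_to_last N t x i)) = (\<Sum>i=1..N. g (x i)) - g (x N) + g (x N - t)"
proof -
  obtain m where N: "N = Suc m" using assms by (cases N) auto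
  have "(\<Sum>i=1..m. g (shift_to_last N t x i)) = (\<Sum>i=1..m. g (x i))"
    using N by (intro sum_shift_to_last_below) auto
  then show ?thesis by (simp add: N shift_to_last_def)
qed

lemma sum_shift_to_last_upto_Suc:
  fixes g :: "real \<Rightarrow> 'a::ab_group_add"
  assumes "N \<ge> 1"
  shows "(\<Sum>i=1..N+1. g (shift_to_last N t x i))
       = (\<Sum>i=1..N+1. g (x i)) - g (x N) - g (x (N + 1)) + g (x N - t) + g (x (N + 1) + t)"
  using sum_shift_to_last_upto[OF assms, of g t x] by (simp add: shift_to_last_def)

lemma aoi_feasible_shift_to_last:
  assumes "N \<ge> 1" and "aoi_feasible N d T s x"
    and "x (N + 1) + t \<ge> d" and "N \<ge> 2 \<Longrightarrow> x N - t \<ge> 2 * d"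
    and "(\<Sum>i=1..N. x i) - t \<ge> s N + real N * d"
  shows "aoi_feasible N d T s (shift_to_last N t x)"
  unfolding aoi_feasible_def
proof (intro conjI ballI)
  fix k assume k: "k \<in> {1..N}"
  show "(\<Sum>i=1..k. shift_to_last N t x i) \<ge> s k + real k * d"
  proof (cases "k < N")
    case True
    then show ?thesis
      using sum_shift_to_last_below[of k N "\<lambda>v. v"] assms(2) k by (auto simp: aoi_feasible_def)
  next
    case False
    then show ?thesis
      using sum_shift_to_last_upto[OF assms(1), of "\<lambda>v. v"] assms(5) k by simp
  qed
next
  fix i assume "i \<in> {2..N}"
  then show "shift_to_last N t x i \<ge> 2 * d"
    using assms(2,4) by (auto simp: aoi_feasible_def shift_to_last_def)
next
  show "shift_to_last N t x (N + 1) \<ge> d"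
    using assms(3) by (simp add: shift_to_last_def)
next
  show "(\<Sum>i=1..N+1. shift_to_last N t x i) = T + real N * d"
    using sum_shift_to_last_upto_Suc[OF assms(1), of "\<lambda>v. v"] assms(2)
    by (simp add: aoi_feasible_def)
qed

lemma aoi_objective_shift_to_last:
  assumes "N \<ge> 1"
  shows "aoi_objective N (shift_to_last N t x)
       = aoi_objective N x + 2 * t * (t - (x N - x (N + 1)))"
  using sum_shift_to_last_upto_Suc[OF assms, of "\<lambda>v. v\<^sup>2"]
  by (simp add: aoi_objective_def power2_eq_square algebra_simps)

lemma aoi_optimal_shift_to_last_nonneg:
  assumes "N \<ge> 1" and "aoi_optimal N d T s x"
    and "x (N + 1) + t \<ge> d" and "N \<ge> 2 \<Longrightarrow> x N - t \<ge> 2 * d"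
    and "(\<Sum>i=1..N. x i) - t \<ge> s N + real N * d"
  shows "t * (t - (x N - x (N + 1))) \<ge> 0"
proof -
  have "aoi_feasible N d T s (shift_to_last N t x)"
    using assms by (intro aoi_feasible_shift_to_last) (auto simp: aoi_optimal_def)
  then have "aoi_objective N x \<le> aoi_objective N (shift_to_last N t x)"
    using assms(2) by (simp add: aoi_optimal_def)
  then show ?thesis
    using aoi_objective_shift_to_last[OF assms(1)] by simp
qed

lemma aoi_optimal_last_le:
  assumes "N \<ge> 1" and "d \<ge> 0" and "s 1 \<ge> 0" and "aoi_optimal N d T s x"
  shows "x (N + 1) \<le> x N"
proof (rule ccontr)
  assume reversed: "\<not> ?thesis"
  have prefix: "(\<Sum>i=1..N. x i) \<ge> s N + real N * d"
    and middle: "N \<ge> 2 \<Longrightarrow> x N \<ge> 2 * d"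
    using assms(1,4) by (auto simp: aoi_optimal_def aoi_feasible_def)
  have "x N \<ge> d"
  proof (cases "N = 1")
    case True
    then show ?thesis using prefix assms(3) by simp
  next
    case False
    then show ?thesis using middle assms(1,2) by simp
  qed
  define t where "t = (x N - x (N + 1)) / 2"
  have "t < 0" and "t * (t - (x N - x (N + 1))) = - t\<^sup>2"
    using reversed by (simp_all add: t_def power2_eq_square field_simps)
  moreover have "x (N + 1) + t \<ge> d" and "x N - t \<ge> x N"
    and "(\<Sum>i=1..N. x i) - t \<ge> s N + real N * d"
    using reversed \<open>x N \<ge> d\<close> prefix \<open>t < 0\<close> by (simp_all add: t_def field_simps)
  ultimately show False
    using aoi_optimal_shift_to_last_nonneg[OF assms(1,4), of t] middle by fastforce
qed

lemma aoi_optimal_gap_imp_tight: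
  assumes "N \<ge> 1" and "aoi_optimal N d T s x" and gap: "x N > x (N + 1)"
  shows "(\<Sum>i=1..N. x i) = s N + real N * d \<or> x N = 2 * d"
proof (rule ccontr)
  assume slack: "\<not> ?thesis"
  have prefix: "(\<Sum>i=1..N. x i) \<ge> s N + real N * d"
    and middle: "N \<ge> 2 \<Longrightarrow> x N \<ge> 2 * d" and last: "x (N + 1) \<ge> d"
    using assms(1,2) by (auto simp: aoi_optimal_def aoi_feasible_def)
  define t where "t = min ((x N - x (N + 1)) / 2)
                     (min ((\<Sum>i=1..N. x i) - (s N + real N * d)) \<bar>x N - 2 * d\<bar>)"
  have "t > 0" using slack gap prefix by (auto simp: t_def)
  moreover have "t < x N - x (N + 1)"
  proof -
    have "t \<le> (x N - x (N + 1)) / 2" unfolding t_def by linarith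
    then show ?thesis using gap by (simp add: field_simps)
  qed
  ultimately have "t * (t - (x N - x (N + 1))) < 0"
    by (simp add: mult_pos_neg)
  moreover have "x N - t \<ge> 2 * d" if "N \<ge> 2"
    using middle[OF that] slack unfolding t_def by linarith
  moreover have "(\<Sum>i=1..N. x i) - t \<ge> s N + real N * d"
    unfolding t_def by linarith
  ultimately show False
    using aoi_optimal_shift_to_last_nonneg[OF assms(1,2), of t] last \<open>t > 0\<close> by fastforce
qed

theorem lemma3:
  fixes N :: nat and d T :: real and s xs :: "nat \<Rightarrow> real"
  assumes "N \<ge> 1" and "d > 0" and "T > 0"
    and "0 \<le> s 1" and "\<And>i j. 1 \<le> i \<Longrightarrow> i \<le> j \<Longrightarrow> j \<le> N \<Longrightarrow> s i \<le> s j"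
    and "aoi_optimal N d T s xs"
  shows "xs N \<ge> xs (N + 1) \<and>
         (xs N > xs (N + 1) \<longrightarrow>
            (\<Sum>i=1..N. xs i) = s N + real N * d \<or> xs N = 2 * d)"
  using aoi_optimal_last_le[of N d s T xs] aoi_optimal_gap_imp_tight[of N d T s xs] assms
  by auto

end
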